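(* Let $V=\mathbb{C}^6$ and let $\pi\subset\mathbb{P}(\wedge^2V)$ be a projective plane all of whose points have rank exactly four. If every line contained in $\pi$ is special, then there is a hyperplane $H\subset V$ such that $\pi\subset\mathbb{P}(\wedge^2H)$ (i.e. $\pi$ is contained in the linear span of a sub-Grassmannian $\mathbb{G}(1,4)\subset\mathbb{G}(1,5)$).
   Context: Elements of $\wedge^2\mathbb{C}^6$ are identified with skew-symmetric $6\times6$ matrices; rank means matrix rank. Fix a basis $e_0,\dots,e_5$ of $V$. A projective line in $\mathbb{P}(\wedge^2V)$ all of whose points have rank four is called special if it is $PGL_6$-equivalent to the line spanned by $e_0\wedge e_2+e_1\wedge e_3$ and $e_0\wedge e_4+e_1\wedge e_2$. Work over $\mathbb{C}$. *)

theory Defs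
  imports "HOL-Analysis.Analysis"
begin

text \<open>Elements of wedge^2 C^6 are identified with skew-symmetric 6x6 complex matrices;
  u wedge v corresponds to the matrix u v^T - v u^T.\<close>

type_synonym cvec6 = "complex ^ 6"
type_synonym cmat6 = "complex ^ 6 ^ 6"

definition skew :: "cmat6 \<Rightarrow> bool" where
  "skew A \<longleftrightarrow> transpose A = - A"

definition wedge :: "cvec6 \<Rightarrow> cvec6 \<Rightarrow> cmat6" where
  "wedge u v = (\<chi> i j. u $ i * v $ j - v $ i * u $ j)"

definition smat :: "complex \<Rightarrow> cmat6 \<Rightarrow> cmat6" where
  "smat c A = (\<chi> i j. c * A $ i $ j)"

definition cspan :: "cmat6 set \<Rightarrow> cmat6 set" where
  "cspan S = {X. \<exists>F c. finite F \<and> F \<subseteq> S \<and> X = (\<Sum>Y\<in>F. smat (c Y) Y)}"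

definition wedge2 :: "cvec6 set \<Rightarrow> cmat6 set" where
  "wedge2 H = cspan {wedge u v | u v. u \<in> H \<and> v \<in> H}"

definition e :: "6 \<Rightarrow> cvec6" where
  "e k = axis k 1"

definition special_model :: "cmat6 set" where
  "special_model = cspan {wedge (e 0) (e 2) + wedge (e 1) (e 3),
                          wedge (e 0) (e 4) + wedge (e 1) (e 2)}"

text \<open>A (projective) line, given as a 2-dimensional linear subspace L, is special if it is
  PGL_6-equivalent to the model line; g acts on wedge^2 V by X \<mapsto> g X g^T.\<close>
definition special :: "cmat6 set \<Rightarrow> bool" where
  "special L \<longleftrightarrow> (\<exists>g::cmat6. invertible g \<and>
      (\<lambda>X. g ** X ** transpose g) ` special_model = L)"

end

(* A special line is congruent, via X |-> g X g^T, to the model line spanned by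
   M1 = e0^e2 + e1^e3 and M2 = e0^e4 + e1^e2, every member of which annihilates e5; hence all
   members of a special line annihilate w = g^-T e5, the fifth row of g^-1.

   Take the special line through A and B. If C w were nonzero, look at the special lines joining C
   to the images of the model points M1, M2 and M1 + M2, whose kernels are spanned by e5 together
   with e4, e3 and e2 - e3 - e4 respectively. A common kernel vector of such a line forces C g^-T
   to send the second spanning vector into the line through C w, so the image of C would be spanned
   by three vectors, contradicting rank C = 4. Therefore A, B and C all annihilate w, and a skew
   matrix annihilating w is a bivector on the hyperplane g {c. c5 = 0} = {y. w . y = 0}. *)

theory Submission
  imports Defs
begin

lemma exhaust_6:
  fixes i :: 6
  shows "i = 0 \<or> i = 1 \<or> i = 2 \<or> i = 3 \<or> i = 4 \<or> i = 5"
proof (induct i)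
  case (of_int z)
  then consider "z = 0" | "z = 1" | "z = 2" | "z = 3" | "z = 4" | "z = 5" by fastforce
  then show ?case by cases simp_all
qed

interpretation cmat: vector_space smat
  by unfold_locales (auto simp: smat_def vec_eq_iff algebra_simps)

lemma cspan_eq_span: "cspan S = cmat.span S"
  unfolding cspan_def cmat.span_explicit by auto

lemma (in vector_space) scale_add_eq_0_imp_zero:
  assumes "x \<noteq> 0" "y \<notin> span {x}" "scale a x + scale b y = 0"
  shows "a = 0 \<and> b = 0"
proof -
  have "b = 0"
  proof (rule ccontr)
    assume "b \<noteq> 0"
    have "scale b y = - scale a x"
      using assms(3) by (simp add: eq_neg_iff_add_eq_0 add.commute)
    moreover have "y = scale (inverse b) (scale b y)"
      using \<open>b \<noteq> 0\<close> by simp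
    ultimately have "y = scale (inverse b) (- scale a x)"
      by simp
    then show False
      using assms(2) by (metis span_base span_neg span_scale insertI1)
  qed
  then show ?thesis using assms(1,3) by simp
qed

subsection \<open>Matrices over a field\<close>

lemma matrix_vector_mult_axis:
  "((A::'a::comm_semiring_1^'n^'m) *v axis j 1) $ i = A $ i $ j"
  by (simp add: matrix_vector_mult_def axis_def if_distrib cong: if_cong)

lemma axis_vector_matrix_mult:
  "axis k 1 v* (A::'a::comm_semiring_1^'n^'m) = A $ k"
proof -
  have "axis k 1 $ i * A $ i $ j = (if i = k then A $ i $ j else 0)" for i j
    by (simp add: axis_def)
  then show ?thesis by (simp add: vec_eq_iff vector_matrix_mult_def)
qed

lemma matrix_vector_mult_in_subspace:
  fixes A :: "'a::field^'n^'m"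
  assumes "vec.subspace S" "\<And>j. A *v axis j 1 \<in> S"
  shows "A *v x \<in> S"
proof -
  have "A *v x = A *v (\<Sum>j\<in>UNIV. x $ j *s axis j 1)"
    by (simp only: basis_expansion)
  also have "\<dots> = (\<Sum>j\<in>UNIV. x $ j *s (A *v axis j 1))"
    by (simp only: vec.sum vector_scalar_commute)
  also have "\<dots> \<in> S"
    using assms by (intro vec.subspace_sum vec.subspace_scale) auto
  finally show ?thesis .
qed

lemma rank_zero: "rank (0::'a::field^'n^'m) = 0"
proof -
  have "rows (0::'a^'n^'m) \<subseteq> {0}" by (auto simp: rows_def row_def vec_eq_iff)
  then show ?thesis unfolding row_rank_def_gen using vec.dim_eq_0 by blast
qed

lemma left_inverse_transpose:
  fixes g gi :: "'a::field^'n^'n"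
  assumes "gi ** g = mat 1"
  shows "g ** gi = mat 1" "transpose g ** transpose gi = mat 1"
    "transpose gi ** transpose g = mat 1"
proof -
  show "g ** gi = mat 1"
    using assms matrix_left_right_inverse by blast
  then show "transpose gi ** transpose g = mat 1"
    by (simp only: matrix_transpose_mul[symmetric] transpose_mat)
  show "transpose g ** transpose gi = mat 1"
    using assms by (simp only: matrix_transpose_mul[symmetric] transpose_mat)
qed

lemma skew_row_matrix_mult:
  fixes A X :: "'a::comm_ring_1^'n^'n"
  assumes "transpose X = - X"
  shows "(A ** X) $ k = - (X *v A $ k)"
proof -
  have "(A ** X) $ k = transpose X *v A $ k"
    by (simp add: vec_eq_iff matrix_matrix_mult_def vector_matrix_mult_def mult.commute)
  then show ?thesis
    using assms by (simp add: vec_eq_iff matrix_vector_mult_def sum_negf)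
qed

lemma rows_subset_range_if_skew:
  fixes A :: "'a::field^'n^'n"
  assumes "transpose A = - A"
  shows "rows A \<subseteq> range ((*v) A)"
proof
  fix r assume "r \<in> rows A"
  then obtain i where r: "r = row i A" by (auto simp: rows_def)
  have "r = (mat 1 ** A) $ i"
    by (simp add: r row_def vec_lambda_eta)
  also have "\<dots> = - (A *v (mat 1 $ i))"
    by (rule skew_row_matrix_mult[OF assms])
  also have "\<dots> = A *v (- (mat 1 $ i))"
    by (simp only: vec.neg)
  finally show "r \<in> range ((*v) A)" by blast
qed

lemma skew_rank_le_card:
  fixes A :: "'a::field^'n^'n"
  assumes "transpose A = - A" "range ((*v) A) \<subseteq> vec.span S" "finite S"
  shows "rank A \<le> card S"
  unfolding row_rank_def_gen
  using rows_subset_range_if_skew[OF assms(1)] assms(2,3) by (intro vec.dim_le_card) auto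

lemma image_in_span_if_kernel_in_span:
  fixes C :: "'a::field^'n^'m"
  assumes "C *v x = 0" "x \<noteq> 0" "x \<in> vec.span {w, v}" "C *v w \<noteq> 0"
  shows "C *v v \<in> vec.span {C *v w}"
proof -
  obtain a b where x: "x = a *s w + b *s v"
    using assms(3) unfolding vec.span_insert[of w "{v}"] vec.span_singleton
    by (auto simp: diff_eq_eq add.commute)
  have "a *s (C *v w) + b *s (C *v v) = 0"
    using assms(1) by (simp add: x matrix_vector_right_distrib vec.scale)
  then have ab: "b *s (C *v v) = - (a *s (C *v w))"
    by (simp add: eq_neg_iff_add_eq_0 add.commute)
  have "b \<noteq> 0"
  proof
    assume "b = 0"
    then have "a = 0" using ab assms(4) by simp
    then show False using \<open>b = 0\<close> x assms(2) by simp
  qed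
  then have "C *v v = inverse b *s (b *s (C *v v))"
    by simp
  also have "\<dots> = inverse b *s - (a *s (C *v w))"
    by (simp only: ab)
  finally show ?thesis by (simp add: vec.span_base vec.span_scale vec.span_neg)
qed

lemma hyperplane_image_subspace:
  "vec.subspace ((*v) (g::'a::field^'n^'n) ` {c. c $ k = 0})"
  by (intro vec.subspace_image) (simp add: vec.subspace_def)

lemma dim_hyperplane_image:
  fixes g gi :: "'a::field^'n^'n"
  assumes "gi ** g = mat 1"
  shows "vec.dim ((*v) g ` {c. c $ k = 0}) = CARD('n) - 1"
proof -
  have "invertible g"
    using assms invertible_left_inverse by blast
  then have "inj_on ((*v) g) (vec.span {c. c $ k = 0})"
    using inj_matrix_vector_mult inj_on_subset by blast
  then have "vec.dim ((*v) g ` {c. c $ k = 0}) = vec.dim {c::'a^'n. c $ k = 0}"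
    by (rule vec.dim_image_eq[OF matrix_vector_mul_linear_gen])
  also have "\<dots> = card (UNIV - {k})"
    using dim_substandard_cart[of "UNIV - {k}"] by simp
  also have "\<dots> = CARD('n) - 1"
    by (simp add: card_Diff_singleton)
  finally show ?thesis .
qed

lemma skew_range_in_hyperplane_image:
  fixes X g gi :: "'a::field^'n^'n"
  assumes "transpose X = - X" "gi ** g = mat 1" "X *v gi $ k = 0"
  shows "X *v z \<in> (*v) g ` {c. c $ k = 0}"
proof
  show "X *v z = g *v (gi *v (X *v z))"
    using left_inverse_transpose(1)[OF assms(2)]
    by (simp only: matrix_vector_mul_assoc[of g] matrix_vector_mul_lid)
  have "(gi ** X) $ k = 0"
    using skew_row_matrix_mult[OF assms(1)] assms(3) by simp
  then have "((gi ** X) *v z) $ k = 0"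
    by (simp add: matrix_vector_mult_def)
  then show "gi *v (X *v z) \<in> {c. c $ k = 0}"
    by (simp only: matrix_vector_mul_assoc mem_Collect_eq)
qed

subsection \<open>Bivectors\<close>

lemma e_nth: "e j $ i = (if i = j then 1 else 0)"
  by (simp add: e_def axis_def)

lemma wedge_zero_left: "wedge 0 v = 0"
  by (simp add: wedge_def vec_eq_iff)

lemma wedge_mult:
  "wedge u v *v y = (\<Sum>j\<in>UNIV. v $ j * y $ j) *s u - (\<Sum>j\<in>UNIV. u $ j * y $ j) *s v"
  by (simp add: vec_eq_iff matrix_vector_mult_def wedge_def sum_subtractf sum_distrib_left
      algebra_simps)

lemma wedge_e_mult: "wedge (e a) (e b) *v y = y $ b *s e a - y $ a *s e b"
proof -
  have "e c $ j * y $ j = (if j = c then y $ j else 0)" for c j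
    by (simp add: e_nth)
  then show ?thesis by (simp add: wedge_mult)
qed

lemma sum_wedge_columns:
  "(\<Sum>j\<in>UNIV. wedge (U *v e j) (V *v e j)) = U ** transpose V - V ** transpose U"
  by (simp add: vec_eq_iff wedge_def e_def matrix_vector_mult_axis matrix_matrix_mult_def
      transpose_def sum_subtractf)

lemma wedge2_subspace: "cmat.subspace (wedge2 H)"
  unfolding wedge2_def cspan_eq_span by (rule cmat.subspace_span)

lemma wedge_mem_wedge2: "u \<in> H \<Longrightarrow> v \<in> H \<Longrightarrow> wedge u v \<in> wedge2 H"
  unfolding wedge2_def cspan_eq_span by (intro cmat.span_base) blast

lemma skew_mem_wedge2_if_factor:
  assumes "transpose X = - X" "X = U ** transpose V"
    and "\<And>j. wedge (U *v e j) (V *v e j) \<in> wedge2 H"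
  shows "X \<in> wedge2 H"
proof -
  have "V ** transpose U = transpose (U ** transpose V)"
    by (simp only: matrix_transpose_mul transpose_transpose)
  then have "V ** transpose U = - X"
    using assms(1,2) by simp
  then have "(\<Sum>j\<in>UNIV. wedge (U *v e j) (V *v e j)) = X + X"
    by (simp add: sum_wedge_columns assms(2)[symmetric])
  then have "X = smat (1/2) (\<Sum>j\<in>UNIV. wedge (U *v e j) (V *v e j))"
    by (simp add: smat_def vec_eq_iff)
  also have "\<dots> \<in> wedge2 H"
    using wedge2_subspace assms(3) by (intro cmat.subspace_scale cmat.subspace_sum)
  finally show ?thesis .
qed

lemma skew_mem_wedge2_hyperplane_image:
  fixes X g gi :: cmat6
  assumes "transpose X = - X" "gi ** g = mat 1" "X *v gi $ k = 0"
  shows "X \<in> wedge2 ((*v) g ` {c. c $ k = 0})"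
proof (rule skew_mem_wedge2_if_factor[OF assms(1)])
  show "X = (X ** transpose gi) ** transpose g"
    using left_inverse_transpose(3)[OF assms(2)] by (simp add: matrix_mul_assoc[symmetric])
  fix j
  show "wedge ((X ** transpose gi) *v e j) (g *v e j) \<in> wedge2 ((*v) g ` {c. c $ k = 0})"
  proof (cases "j = k")
    case True
    then have "(X ** transpose gi) *v e j = 0"
      using assms(3) by (simp add: e_def axis_vector_matrix_mult matrix_vector_mul_assoc[symmetric])
    then show ?thesis
      using wedge2_subspace by (simp add: wedge_zero_left cmat.subspace_0)
  next
    case False
    have "(X ** transpose gi) *v e j \<in> (*v) g ` {c. c $ k = 0}"
      using skew_range_in_hyperplane_image[OF assms]
      by (simp add: matrix_vector_mul_assoc[symmetric])
    moreover have "g *v e j \<in> (*v) g ` {c. c $ k = 0}"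
      using False by (simp add: e_nth)
    ultimately show ?thesis by (rule wedge_mem_wedge2)
  qed
qed

subsection \<open>The model special line\<close>

definition special_gen1 :: cmat6 where
  "special_gen1 = wedge (e 0) (e 2) + wedge (e 1) (e 3)"

definition special_gen2 :: cmat6 where
  "special_gen2 = wedge (e 0) (e 4) + wedge (e 1) (e 2)"

lemma special_model_span: "special_model = cmat.span {special_gen1, special_gen2}"
  unfolding special_model_def cspan_eq_span special_gen1_def special_gen2_def ..

lemma special_gens_mem:
  "special_gen1 \<in> special_model" "special_gen2 \<in> special_model"
  "special_gen1 + special_gen2 \<in> special_model"
  unfolding special_model_span by (auto intro: cmat.span_base cmat.span_add)

lemma special_gens_nonzero:
  "special_gen1 \<noteq> 0" "special_gen2 \<noteq> 0" "special_gen1 + special_gen2 \<noteq> 0"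
proof -
  have "special_gen1 $ 0 $ 2 = 1" "special_gen2 $ 0 $ 4 = 1"
    "(special_gen1 + special_gen2) $ 0 $ 2 = 1"
    by (simp_all add: special_gen1_def special_gen2_def wedge_def e_nth)
  then show "special_gen1 \<noteq> 0" "special_gen2 \<noteq> 0" "special_gen1 + special_gen2 \<noteq> 0"
    by (auto simp del: vector_add_component)
qed

lemma special_model_mult_e5:
  assumes "X \<in> special_model"
  shows "X *v e 5 = 0"
proof -
  have "cmat.span {special_gen1, special_gen2} \<subseteq> {X. X *v e 5 = 0}"
  proof (rule cmat.span_minimal)
    show "{special_gen1, special_gen2} \<subseteq> {X. X *v e 5 = 0}"
      by (simp add: special_gen1_def special_gen2_def matrix_vector_mult_add_rdistrib
          wedge_e_mult e_nth)
    have "smat c X *v y = c *s (X *v y)" for c X y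
      by (simp add: vec_eq_iff matrix_vector_mult_def smat_def sum_distrib_left mult.assoc)
    then show "cmat.subspace {X. X *v e 5 = 0}"
      unfolding cmat.subspace_def by (simp add: matrix_vector_mult_add_rdistrib)
  qed
  then show ?thesis
    using assms unfolding special_model_span by auto
qed

lemma special_gen1_kernel:
  "{y. special_gen1 *v y = 0} \<subseteq> vec.span {e 5, e 4}" (is "_ \<subseteq> ?S")
proof
  fix y assume "y \<in> {y. special_gen1 *v y = 0}"
  then have "(special_gen1 *v y) $ i = 0" for i
    by simp
  from this[of 0] this[of 1] this[of 2] this[of 3]
  have "y $ 0 = 0" "y $ 1 = 0" "y $ 2 = 0" "y $ 3 = 0"
    by (simp_all add: special_gen1_def matrix_vector_mult_add_rdistrib wedge_e_mult e_nth)
  then have "y = y $ 5 *s e 5 + y $ 4 *s e 4"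
    by (simp add: vec_eq_iff e_nth) (metis exhaust_6)
  also have "\<dots> \<in> ?S"
    by (intro vec.span_add vec.span_scale vec.span_base) auto
  finally show "y \<in> ?S" .
qed

lemma special_gen2_kernel:
  "{y. special_gen2 *v y = 0} \<subseteq> vec.span {e 5, e 3}" (is "_ \<subseteq> ?S")
proof
  fix y assume "y \<in> {y. special_gen2 *v y = 0}"
  then have "(special_gen2 *v y) $ i = 0" for i
    by simp
  from this[of 0] this[of 1] this[of 2] this[of 4]
  have "y $ 0 = 0" "y $ 1 = 0" "y $ 2 = 0" "y $ 4 = 0"
    by (simp_all add: special_gen2_def matrix_vector_mult_add_rdistrib wedge_e_mult e_nth)
  then have "y = y $ 5 *s e 5 + y $ 3 *s e 3"
    by (simp add: vec_eq_iff e_nth) (metis exhaust_6)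
  also have "\<dots> \<in> ?S"
    by (intro vec.span_add vec.span_scale vec.span_base) auto
  finally show "y \<in> ?S" .
qed

lemma special_gen_sum_kernel:
  "{y. (special_gen1 + special_gen2) *v y = 0} \<subseteq> vec.span {e 5, e 2 - e 3 - e 4}"
  (is "_ \<subseteq> ?S")
proof
  fix y assume "y \<in> {y. (special_gen1 + special_gen2) *v y = 0}"
  then have "((special_gen1 + special_gen2) *v y) $ i = 0" for i
    by simp
  from this[of 0] this[of 1] this[of 2] this[of 3] this[of 4]
  have "y $ 0 = 0" "y $ 1 = 0" "y $ 2 + y $ 3 = 0" "y $ 2 + y $ 4 = 0"
    by (simp_all add: special_gen1_def special_gen2_def matrix_vector_mult_add_rdistrib
        wedge_e_mult e_nth algebra_simps)
  then have "y $ 0 = 0" "y $ 1 = 0" "y $ 3 = - y $ 2" "y $ 4 = - y $ 2"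
    by (simp_all add: eq_neg_iff_add_eq_0 add.commute)
  then have "y = y $ 5 *s e 5 + y $ 2 *s (e 2 - e 3 - e 4)"
    by (simp add: vec_eq_iff e_nth) (metis exhaust_6)
  also have "\<dots> \<in> ?S"
    by (intro vec.span_add vec.span_scale vec.span_base) auto
  finally show "y \<in> ?S" .
qed

subsection \<open>Special lines\<close>

lemma congruence_mult_inverse_row:
  fixes g gi M :: "'a::field^'n^'n"
  assumes "gi ** g = mat 1"
  shows "(g ** M ** transpose g) *v gi $ k = g *v (M *v axis k 1)"
proof -
  have "transpose g *v gi $ k = axis k 1"
    using left_inverse_transpose(2)[OF assms]
    by (metis axis_vector_matrix_mult matrix_vector_mul_assoc matrix_vector_mul_lid
        transpose_matrix_vector)
  then show ?thesis
    by (simp only: matrix_vector_mul_assoc[symmetric])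
qed

lemma congruence_kernel:
  fixes g gi M :: "'a::field^'n^'n"
  assumes "gi ** g = mat 1" "(g ** M ** transpose g) *v x = 0"
  shows "M *v (transpose g *v x) = 0"
proof -
  have "M *v (transpose g *v x) = (gi ** g ** M ** transpose g) *v x"
    using assms(1) by (simp only: matrix_mul_lid matrix_vector_mul_assoc)
  also have "\<dots> = gi *v ((g ** M ** transpose g) *v x)"
    by (simp only: matrix_vector_mul_assoc matrix_mul_assoc)
  finally show ?thesis
    using assms(2) by simp
qed

lemma congruence_eq_0_imp:
  fixes g gi M :: "'a::field^'n^'n"
  assumes "gi ** g = mat 1" "g ** M ** transpose g = 0"
  shows "M = 0"
proof -
  have "gi ** (g ** M ** transpose g) ** transpose gi
      = (gi ** g) ** M ** (transpose g ** transpose gi)"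
    by (simp only: matrix_mul_assoc)
  then have "gi ** (g ** M ** transpose g) ** transpose gi = M"
    using left_inverse_transpose[OF assms(1)] assms(1) by simp
  then show ?thesis
    using assms(2) by simp
qed

lemma congruent_model_kills:
  fixes g gi X :: cmat6
  assumes "gi ** g = mat 1" "X \<in> (\<lambda>M. g ** M ** transpose g) ` special_model"
  shows "X *v gi $ 5 = 0"
proof -
  obtain M where "M \<in> special_model" "X = g ** M ** transpose g"
    using assms(2) by blast
  then show ?thesis
    using special_model_mult_e5 congruence_mult_inverse_row[OF assms(1), where M = M and k = 5]
    by (simp add: e_def)
qed

lemma special_common_kernel:
  assumes "special L"
  shows "\<exists>x. x \<noteq> 0 \<and> (\<forall>X\<in>L. X *v x = 0)"
proof -
  obtain g where "invertible g" and L: "(\<lambda>X. g ** X ** transpose g) ` special_model = L"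
    using assms unfolding special_def by blast
  then obtain gi where gi: "gi ** g = mat 1"
    using invertible_left_inverse by blast
  have "gi $ 5 \<noteq> 0"
  proof
    assume "gi $ 5 = 0"
    then have "(gi ** g) $ 5 $ 5 = 0"
      by (simp add: matrix_matrix_mult_def)
    then show False
      using gi by (simp add: mat_def)
  qed
  moreover have "X *v gi $ 5 = 0" if "X \<in> L" for X
    using congruent_model_kills[OF gi] that L by blast
  ultimately show ?thesis by blast
qed

lemma special_line_image_in_span:
  fixes g gi M C :: cmat6
  assumes gi: "gi ** g = mat 1"
    and special: "special (cspan {g ** M ** transpose g, C})"
    and kernel: "{y. M *v y = 0} \<subseteq> vec.span {e 5, u}"
    and "C *v gi $ 5 \<noteq> 0"
  shows "C *v (transpose gi *v u) \<in> vec.span {C *v gi $ 5}"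
proof -
  obtain x where "x \<noteq> 0" and x: "\<forall>X\<in>cspan {g ** M ** transpose g, C}. X *v x = 0"
    using special_common_kernel[OF special] by blast
  then have "(g ** M ** transpose g) *v x = 0" "C *v x = 0"
    unfolding cspan_eq_span by (auto intro: cmat.span_base)
  then have "transpose g *v x \<in> vec.span {e 5, u}"
    using kernel congruence_kernel[OF gi] by blast
  moreover note left_inverse_transpose(3)[OF gi]
  ultimately have "x \<in> (*v) (transpose gi) ` vec.span {e 5, u}"
    by (metis image_eqI matrix_vector_mul_assoc matrix_vector_mul_lid)
  also have "\<dots> = vec.span ((*v) (transpose gi) ` {e 5, u})"
    by (simp only: vec.span_image)
  also have "\<dots> = vec.span {gi $ 5, transpose gi *v u}"
    by (simp only: image_insert image_empty e_def transpose_matrix_vector axis_vector_matrix_mult)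
  finally show ?thesis
    by (rule image_in_span_if_kernel_in_span[OF \<open>C *v x = 0\<close> \<open>x \<noteq> 0\<close> _ assms(4)])
qed

lemma common_kernel_extends_to_third:
  fixes g gi C :: cmat6
  assumes skew: "transpose C = - C" and rank: "rank C = 4" and gi: "gi ** g = mat 1"
    and special: "\<And>M. M \<in> special_model \<Longrightarrow> M \<noteq> 0 \<Longrightarrow>
                    special (cspan {g ** M ** transpose g, C})"
  shows "C *v gi $ 5 = 0"
proof (rule ccontr)
  assume Cw: "C *v gi $ 5 \<noteq> 0"
  define col where "col j = C *v (transpose gi *v e j)" for j
  define S where "S = vec.span {col 0, col 1, col 5}"
  have col5: "col 5 = C *v gi $ 5"
    by (simp add: col_def e_def axis_vector_matrix_mult)
  have "col 4 \<in> vec.span {col 5}"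
    using special_line_image_in_span[OF gi special[OF special_gens_mem(1) special_gens_nonzero(1)]
        special_gen1_kernel Cw]
    unfolding col5 by (simp only: col_def)
  moreover have "col 3 \<in> vec.span {col 5}"
    using special_line_image_in_span[OF gi special[OF special_gens_mem(2) special_gens_nonzero(2)]
        special_gen2_kernel Cw]
    unfolding col5 by (simp only: col_def)
  moreover have "col 2 - col 3 - col 4 \<in> vec.span {col 5}"
    using special_line_image_in_span[OF gi special[OF special_gens_mem(3) special_gens_nonzero(3)]
        special_gen_sum_kernel Cw]
    unfolding col5 by (simp only: col_def matrix_vector_mult_diff_distrib)
  moreover have "vec.span {col 5} \<subseteq> S"
    unfolding S_def by (intro vec.span_mono) auto
  ultimately have "col 4 \<in> S" "col 3 \<in> S" "col 2 - col 3 - col 4 \<in> S"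
    by auto
  then have "(col 2 - col 3 - col 4) + col 3 + col 4 \<in> S"
    unfolding S_def by (intro vec.span_add)
  then have "col 2 \<in> S"
    by simp
  have col_S: "col j \<in> S" for j
    using exhaust_6[of j] \<open>col 2 \<in> S\<close> \<open>col 3 \<in> S\<close> \<open>col 4 \<in> S\<close>
    by (elim disjE) (auto simp: S_def intro: vec.span_base)
  have "(C ** transpose gi) *v y \<in> S" for y
  proof (rule matrix_vector_mult_in_subspace)
    show "vec.subspace S"
      unfolding S_def by (rule vec.subspace_span)
    have "(C ** transpose gi) *v axis j 1 = col j" for j
      by (simp only: col_def e_def matrix_vector_mul_assoc)
    then show "(C ** transpose gi) *v axis j 1 \<in> S" for j
      using col_S by simp
  qed
  then have "(C ** transpose gi) *v (transpose g *v z) \<in> S" for z .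
  moreover have "(C ** transpose gi) *v (transpose g *v z) = C *v z" for z
    using left_inverse_transpose(3)[OF gi]
    by (simp only: matrix_vector_mul_assoc matrix_mul_assoc[symmetric] matrix_mul_rid)
  ultimately have "range ((*v) C) \<subseteq> S"
    by auto
  then have "rank C \<le> card {col 0, col 1, col 5}"
    unfolding S_def by (intro skew_rank_le_card[OF skew]) auto
  also have "\<dots> \<le> 3"
    by (simp add: card_insert_if)
  finally show False
    using rank by simp
qed

lemma independent_if_rank_four:
  assumes "\<forall>a b c. (a, b, c) \<noteq> (0, 0, 0) \<longrightarrow> rank (smat a A + smat b B + smat c C) = 4"
  shows "\<forall>a b c. smat a A + smat b B + smat c C = 0 \<longrightarrow> a = 0 \<and> b = 0 \<and> c = 0"
proof (intro allI impI)
  fix a b c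
  assume zero: "smat a A + smat b B + smat c C = 0"
  show "a = 0 \<and> b = 0 \<and> c = 0"
  proof (rule ccontr)
    assume "\<not> (a = 0 \<and> b = 0 \<and> c = 0)"
    then have "rank (smat a A + smat b B + smat c C) = 4"
      using assms by auto
    then show False
      using zero by (simp add: rank_zero)
  qed
qed

lemma special_line_through_first_two:
  assumes indep: "\<forall>a b c. smat a A + smat b B + smat c C = 0 \<longrightarrow> a = 0 \<and> b = 0 \<and> c = 0"
    and lines_special: "\<forall>P \<in> cspan {A, B, C}. \<forall>Q \<in> cspan {A, B, C}.
                   (\<forall>a b. smat a P + smat b Q = 0 \<longrightarrow> a = 0 \<and> b = 0)
                   \<longrightarrow> special (cspan {P, Q})"
  shows "special (cspan {A, B})"
proof -
  have "A \<in> cspan {A, B, C}" "B \<in> cspan {A, B, C}"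
    unfolding cspan_eq_span by (auto intro: cmat.span_base)
  moreover have "\<forall>a b. smat a A + smat b B = 0 \<longrightarrow> a = 0 \<and> b = 0"
  proof (intro allI impI)
    fix a b
    assume "smat a A + smat b B = 0"
    then have "smat a A + smat b B + smat 0 C = 0"
      by simp
    then show "a = 0 \<and> b = 0"
      using indep by blast
  qed
  ultimately show ?thesis
    using lines_special by blast
qed

lemma special_line_through_third:
  assumes indep: "\<forall>a b c. smat a A + smat b B + smat c C = 0 \<longrightarrow> a = 0 \<and> b = 0 \<and> c = 0"
    and lines_special: "\<forall>P \<in> cspan {A, B, C}. \<forall>Q \<in> cspan {A, B, C}.
                   (\<forall>a b. smat a P + smat b Q = 0 \<longrightarrow> a = 0 \<and> b = 0)
                   \<longrightarrow> special (cspan {P, Q})"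
    and P: "P \<in> cspan {A, B}" "P \<noteq> 0"
  shows "special (cspan {P, C})"
proof -
  have "C \<notin> cmat.span {A, B}"
  proof
    assume "C \<in> cmat.span {A, B}"
    then obtain \<alpha> \<beta> where "C - smat \<alpha> A = smat \<beta> B"
      unfolding cmat.span_insert[of A "{B}"] cmat.span_singleton by auto
    then have "C = smat \<alpha> A + smat \<beta> B"
      by (simp add: diff_eq_eq add.commute)
    then have "smat \<alpha> A + smat \<beta> B + smat (-1) C = 0"
      by (simp add: smat_def vec_eq_iff algebra_simps)
    then show False
      using indep by fastforce
  qed
  moreover have "cmat.span {P} \<subseteq> cmat.span {A, B}"
    using P(1) unfolding cspan_eq_span by (intro cmat.span_minimal cmat.subspace_span) auto
  ultimately have "\<forall>a b. smat a P + smat b C = 0 \<longrightarrow> a = 0 \<and> b = 0"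
    using P(2) cmat.scale_add_eq_0_imp_zero by blast
  moreover have "cmat.span {A, B} \<subseteq> cmat.span {A, B, C}"
    by (intro cmat.span_mono) auto
  then have "P \<in> cspan {A, B, C}" "C \<in> cspan {A, B, C}"
    using P(1) unfolding cspan_eq_span by (auto intro: cmat.span_base)
  ultimately show ?thesis
    using lines_special by blast
qed

theorem mainTheorem6:
  fixes A B C :: cmat6
  assumes skewA: "skew A" and skewB: "skew B" and skewC: "skew C"
    and rank4: "\<forall>a b c. (a, b, c) \<noteq> (0, 0, 0) \<longrightarrow>
                   rank (smat a A + smat b B + smat c C) = 4"
    and lines_special: "\<forall>P \<in> cspan {A, B, C}. \<forall>Q \<in> cspan {A, B, C}.
                   (\<forall>a b. smat a P + smat b Q = 0 \<longrightarrow> a = 0 \<and> b = 0)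
                   \<longrightarrow> special (cspan {P, Q})"
  shows "\<exists>H :: cvec6 set. vec.subspace H \<and> vec.dim H = 5 \<and> cspan {A, B, C} \<subseteq> wedge2 H"
proof -
  have indep: "\<forall>a b c. smat a A + smat b B + smat c C = 0 \<longrightarrow> a = 0 \<and> b = 0 \<and> c = 0"
    using rank4 by (rule independent_if_rank_four)
  obtain g where "invertible g"
    and img: "(\<lambda>X. g ** X ** transpose g) ` special_model = cspan {A, B}"
    using special_line_through_first_two[OF indep lines_special] unfolding special_def by blast
  then obtain gi where gi: "gi ** g = mat 1"
    using invertible_left_inverse by blast
  have "A \<in> cspan {A, B}" "B \<in> cspan {A, B}"
    unfolding cspan_eq_span by (auto intro: cmat.span_base)
  then have "A *v gi $ 5 = 0" "B *v gi $ 5 = 0"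
    using congruent_model_kills[OF gi] img by auto
  moreover have "C *v gi $ 5 = 0"
  proof (rule common_kernel_extends_to_third[OF _ _ gi])
    show "transpose C = - C" "rank C = 4"
      using skewC rank4[rule_format, of 0 0 1] by (simp_all add: skew_def)
    fix M assume M: "M \<in> special_model" "M \<noteq> 0"
    then have "g ** M ** transpose g \<in> cspan {A, B}" "g ** M ** transpose g \<noteq> 0"
      using img congruence_eq_0_imp[OF gi] by blast+
    then show "special (cspan {g ** M ** transpose g, C})"
      by (rule special_line_through_third[OF indep lines_special])
  qed
  ultimately have "{A, B, C} \<subseteq> wedge2 ((*v) g ` {c. c $ 5 = 0})"
    using skewA skewB skewC skew_mem_wedge2_hyperplane_image[OF _ gi] by (auto simp: skew_def)
  then have "cspan {A, B, C} \<subseteq> wedge2 ((*v) g ` {c. c $ 5 = 0})"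
    unfolding cspan_eq_span by (rule cmat.span_minimal[OF _ wedge2_subspace])
  moreover have "vec.dim ((*v) g ` {c. c $ 5 = 0}) = 5"
    using dim_hyperplane_image[OF gi] by simp
  ultimately show ?thesis
    using hyperplane_image_subspace by blast
qed

end
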